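(* Let $0<s_1<s_2$, $0<\epsilon<\min(s_1,s_2-s_1)$ and $M>\epsilon$ satisfy \[ \frac{2}{s_2+\epsilon}+\frac{1}{2s_2+\epsilon}+\frac{1}{2s_1+\epsilon}>\frac{\sqrt3}{s_1-\epsilon}+\frac1{s_1}+\frac1{M-\epsilon}. \] Let $(r_1,r_2,r_3)\in(0,\epsilon)\times(s_2-\epsilon,s_2)\times(s_2,s_2+\epsilon)$ and $(\ell_1,\ell_2,\ell_3)\in(s_1-\epsilon,s_1)\times(s_1,s_1+\epsilon)\times(M,\infty)$, and suppose $r_3\ge\varphi(r_1,r_2)$ and $\ell_3\ge\varphi(\ell_1,\ell_2)$. Then \[ c(r_1,r_2,r_3)+c(\ell_1,\ell_2,\ell_3)>c(\ell_1,r_2,r_3)+c(r_1,\ell_2,\ell_3). \]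
   Context: For $r_1,r_2,r_3\ge 0$ and $(\alpha,\beta)\in\mathbb T^2$ let \[C(r_1,r_2,r_3,\alpha,\beta)=\frac{1}{\sqrt{r_1^2+r_2^2-2r_1r_2\cos\alpha}}+\frac{1}{\sqrt{r_1^2+r_3^2-2r_1r_3\cos\beta}}+\frac{1}{\sqrt{r_2^2+r_3^2-2r_2r_3\cos(\alpha-\beta)}}\] (value $+\infty$ if a denominator vanishes), and let the radial cost be $c(r_1,r_2,r_3)=\min_{(\alpha,\beta)\in\mathbb T^2}C(r_1,r_2,r_3,\alpha,\beta)$. For $0<r_1<r_2$, $\varphi(r_1,r_2)=\dfrac{5r_1r_2+r_2^2+(r_1+r_2)\sqrt{r_2^2+12r_1r_2-4r_1^2}}{2(r_2-r_1)}$; the condition $r_3\ge\varphi(r_1,r_2)$ (for $r_3>0$) is equivalent to $r_2(r_3-r_1)^3-r_1(r_3+r_2)^3-r_3(r_1+r_2)^3\ge0$. *)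

theory Defs
  imports "HOL-Analysis.Analysis" "HOL-Library.Extended_Real"
begin

text \<open>Reciprocal distance between points at radii a, b with angle difference theta;
  value +infinity when the distance vanishes.\<close>
definition inv_dist :: "real \<Rightarrow> real \<Rightarrow> real \<Rightarrow> ereal" where
  "inv_dist a b \<theta> =
     (let d = sqrt (a\<^sup>2 + b\<^sup>2 - 2 * a * b * cos \<theta>)
      in if d = 0 then PInfty else ereal (1 / d))"

definition Ccost :: "real \<Rightarrow> real \<Rightarrow> real \<Rightarrow> real \<Rightarrow> real \<Rightarrow> ereal" where
  "Ccost r1 r2 r3 \<alpha> \<beta> = inv_dist r1 r2 \<alpha> + inv_dist r1 r3 \<beta> + inv_dist r2 r3 (\<alpha> - \<beta>)"

text \<open>Radial cost: minimum over the torus; angles are taken as reals (cos is 2pi-periodic).\<close>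
definition rcost :: "real \<Rightarrow> real \<Rightarrow> real \<Rightarrow> ereal" where
  "rcost r1 r2 r3 = (INF p \<in> (UNIV :: (real \<times> real) set). Ccost r1 r2 r3 (fst p) (snd p))"

definition phi :: "real \<Rightarrow> real \<Rightarrow> real" where
  "phi r1 r2 = (5 * r1 * r2 + r2\<^sup>2 + (r1 + r2) * sqrt (r2\<^sup>2 + 12 * r1 * r2 - 4 * r1\<^sup>2))
               / (2 * (r2 - r1))"

end

theory Submission
  imports Defs
begin

text \<open>
  Each of the four radial costs is bounded separately. For (l1, l2, l3) every pairwise distance is
  at most the sum of the radii. For (l1, r2, r3) all radii are at least s1 - \<epsilon>, and the
  equilateral configuration (angles 2pi/3) gives at most sqrt 3 / (s1 - \<epsilon>). For (r1, l2, l3) the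
  collinear configuration with r1 opposite l2 and aligned with l3 is an upper bound. For
  (r1, r2, r3), where r1 is almost at the origin, the tangent line of 1/sqrt x at the square of s2 + \<epsilon>
  shows that the first two terms can only drop below 2/(s2 + \<epsilon>) when the distance between r2 and
  r3 is less than sqrt 3 (s2 + \<epsilon>), and then the third term pays for it; this needs \<epsilon> small
  compared to s2, which the hypothesis forces. Summing, the hypothesis yields the claim.
\<close>

definition sqdist :: "real \<Rightarrow> real \<Rightarrow> real \<Rightarrow> real" where
  "sqdist a b \<theta> = a\<^sup>2 + b\<^sup>2 - 2 * a * b * cos \<theta>"

lemma sqdist_ge:
  assumes "0 \<le> a" "0 \<le> b"
  shows "(a - b)\<^sup>2 \<le> sqdist a b \<theta>"
proof -
  have "sqdist a b \<theta> = (a - b)\<^sup>2 + 2 * (a * b * (1 - cos \<theta>))"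
    unfolding sqdist_def by (simp add: algebra_simps power2_eq_square)
  moreover have "a * b * (1 - cos \<theta>) \<ge> 0" using assms by simp
  ultimately show ?thesis by linarith
qed

lemma sqdist_le:
  assumes "0 \<le> a" "0 \<le> b"
  shows "sqdist a b \<theta> \<le> (a + b)\<^sup>2"
proof -
  have "sqdist a b \<theta> = (a + b)\<^sup>2 - 2 * (a * b * (1 + cos \<theta>))"
    unfolding sqdist_def by (simp add: algebra_simps power2_eq_square)
  moreover have "1 + cos \<theta> \<ge> 0" using cos_ge_minus_one[of \<theta>] by linarith
  then have "a * b * (1 + cos \<theta>) \<ge> 0" using assms by simp
  ultimately show ?thesis by linarith
qed

lemma sqdist_pos:
  assumes "0 \<le> a" "0 \<le> b" "a \<noteq> b"
  shows "0 < sqdist a b \<theta>"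
proof -
  have "0 < (a - b)\<^sup>2" using assms(3) by simp
  then show ?thesis using sqdist_ge[OF assms(1,2), of \<theta>] by linarith
qed

lemma sqrt_sqdist_le:
  assumes "0 \<le> a" "0 \<le> b"
  shows "sqrt (sqdist a b \<theta>) \<le> a + b"
  using real_sqrt_le_mono[OF sqdist_le[OF assms]] assms by simp

lemma sqdist_add:
  "sqdist c a \<alpha> + sqdist c b \<beta> = 2 * c\<^sup>2 + a\<^sup>2 + b\<^sup>2 - 2 * c * (a * cos \<alpha> + b * cos \<beta>)"
  unfolding sqdist_def by (simp add: algebra_simps)

lemma cos_combination_sq_le:
  "(a * cos \<alpha> + b * cos \<beta>)\<^sup>2 \<le> 2 * a\<^sup>2 + 2 * b\<^sup>2 - sqdist a b (\<alpha> - \<beta>)"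
proof -
  have "2 * a\<^sup>2 + 2 * b\<^sup>2 - sqdist a b (\<alpha> - \<beta>)
        = (a * cos \<alpha> + b * cos \<beta>)\<^sup>2 + (a * sin \<alpha> + b * sin \<beta>)\<^sup>2"
    unfolding sqdist_def cos_diff power2_eq_square
    using sin_cos_squared_add[of \<alpha>] sin_cos_squared_add[of \<beta>] by algebra
  then show ?thesis by simp
qed

lemma inv_dist_sqdist:
  "inv_dist a b \<theta> = (if sqdist a b \<theta> = 0 then \<infinity> else ereal (1 / sqrt (sqdist a b \<theta>)))"
  unfolding inv_dist_def sqdist_def Let_def by simp

lemma inv_dist_eq:
  assumes "0 \<le> a" "0 \<le> b" "a \<noteq> b"
  shows "inv_dist a b \<theta> = ereal (1 / sqrt (sqdist a b \<theta>))"
  using sqdist_pos[OF assms, of \<theta>] by (simp add: inv_dist_sqdist)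

lemma inv_dist_ge_inverse_add:
  assumes "0 \<le> a" "0 \<le> b" "0 < a + b"
  shows "ereal (1 / (a + b)) \<le> inv_dist a b \<theta>"
proof (cases "sqdist a b \<theta> = 0")
  case False
  moreover have "0 \<le> sqdist a b \<theta>"
    using sqdist_ge[OF assms(1,2), of \<theta>] zero_le_power2[of "a - b"] by linarith
  ultimately have "0 < sqrt (sqdist a b \<theta>)" by simp
  then have "1 / (a + b) \<le> 1 / sqrt (sqdist a b \<theta>)"
    using sqrt_sqdist_le[OF assms(1,2)] assms(3) by (intro divide_left_mono mult_pos_pos) auto
  with False show ?thesis by (simp add: inv_dist_sqdist)
qed (simp add: inv_dist_sqdist)

lemma inv_dist_pi:
  assumes "0 \<le> a" "0 \<le> b" "0 < a + b"
  shows "inv_dist a b pi = ereal (1 / (a + b))"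
proof -
  have "sqdist a b pi = (a + b)\<^sup>2" unfolding sqdist_def by (simp add: power2_eq_square algebra_simps)
  with assms show ?thesis by (simp add: inv_dist_sqdist)
qed

lemma inv_dist_zero:
  assumes "a < b"
  shows "inv_dist a b 0 = ereal (1 / (b - a))"
proof -
  have "sqdist a b 0 = (b - a)\<^sup>2" unfolding sqdist_def by (simp add: power2_eq_square algebra_simps)
  with assms show ?thesis by (simp add: inv_dist_sqdist)
qed

lemma inv_dist_le_of_cos_eq:
  assumes "0 < m" "m \<le> a" "m \<le> b" "cos \<theta> = -1/2"
  shows "inv_dist a b \<theta> \<le> ereal (1 / (sqrt 3 * m))"
proof -
  have "3 * m\<^sup>2 \<le> sqdist a b \<theta>"
  proof -
    have "m * m \<le> a * a" "m * m \<le> b * b" "m * m \<le> a * b"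
      using assms by (auto intro: mult_mono)
    then show ?thesis unfolding sqdist_def assms(4) by (simp add: power2_eq_square)
  qed
  then have "sqrt (3 * m\<^sup>2) \<le> sqrt (sqdist a b \<theta>)" by (rule real_sqrt_le_mono)
  then have le: "sqrt 3 * m \<le> sqrt (sqdist a b \<theta>)" using assms(1) by (simp add: real_sqrt_mult)
  have pos: "0 < sqrt 3 * m" using assms(1) by simp
  have root_pos: "0 < sqrt (sqdist a b \<theta>)" using le pos by linarith
  have "1 / sqrt (sqdist a b \<theta>) \<le> 1 / (sqrt 3 * m)"
    using le pos root_pos by (intro divide_left_mono) auto
  moreover have "sqdist a b \<theta> \<noteq> 0" using root_pos by auto
  ultimately show ?thesis by (simp add: inv_dist_sqdist)
qed

lemma cos_240: "cos (4 * pi / 3) = -1/2"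
  using cos_periodic_pi[of "pi / 3"] cos_60 by (simp add: field_simps)

lemma rcost_le_Ccost: "rcost a b c \<le> Ccost a b c \<alpha> \<beta>"
  unfolding rcost_def by (rule INF_lower2[of "(\<alpha>, \<beta>)"]) simp_all

lemma rcost_ge:
  assumes "\<And>\<alpha> \<beta>. x \<le> Ccost a b c \<alpha> \<beta>"
  shows "x \<le> rcost a b c"
  unfolding rcost_def using assms by (auto intro: INF_greatest)

lemma rcost_ge_inverse_sums:
  assumes "0 < a" "0 < b" "0 < c"
  shows "ereal (1 / (a + b) + 1 / (a + c) + 1 / (b + c)) \<le> rcost a b c"
proof (rule rcost_ge)
  fix \<alpha> \<beta>
  have "ereal (1 / (a + b)) + ereal (1 / (a + c)) + ereal (1 / (b + c)) \<le> Ccost a b c \<alpha> \<beta>"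
    unfolding Ccost_def using assms by (intro add_mono inv_dist_ge_inverse_add) auto
  then show "ereal (1 / (a + b) + 1 / (a + c) + 1 / (b + c)) \<le> Ccost a b c \<alpha> \<beta>" by simp
qed

lemma rcost_le_collinear:
  assumes "0 < a" "a < c" "0 < b"
  shows "rcost a b c \<le> ereal (1 / (a + b) + 1 / (c - a) + 1 / (b + c))"
proof -
  have "Ccost a b c pi 0 = ereal (1 / (a + b) + 1 / (c - a) + 1 / (b + c))"
    unfolding Ccost_def using assms by (simp add: inv_dist_pi inv_dist_zero)
  then show ?thesis using rcost_le_Ccost by metis
qed

lemma rcost_le_equilateral:
  assumes "0 < m" "m \<le> a" "m \<le> b" "m \<le> c"
  shows "rcost a b c \<le> ereal (sqrt 3 / m)"
proof -
  have cos: "cos (2 * pi / 3) = -1/2" "cos (- (2 * pi / 3)) = -1/2"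
    "cos (2 * pi / 3 - - (2 * pi / 3)) = -1/2"
    using cos_120 cos_240 by (simp_all add: field_simps)
  have "Ccost a b c (2 * pi / 3) (- (2 * pi / 3))
        \<le> ereal (1 / (sqrt 3 * m)) + ereal (1 / (sqrt 3 * m)) + ereal (1 / (sqrt 3 * m))"
    unfolding Ccost_def using assms cos by (intro add_mono inv_dist_le_of_cos_eq) auto
  also have "\<dots> = ereal (sqrt 3 / m)"
  proof -
    have "3 * (1 / (sqrt 3 * m)) = sqrt 3 * sqrt 3 / (sqrt 3 * m)" by simp
    also have "\<dots> = sqrt 3 / m" by (rule mult_divide_mult_cancel_left) simp
    finally show ?thesis by (simp add: mult.commute)
  qed
  finally show ?thesis using rcost_le_Ccost order_trans by blast
qed

lemma inverse_sqrt_tangent: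
  assumes "0 < x" "0 < a"
  shows "(3 * a\<^sup>2 - x) / (2 * a ^ 3) \<le> 1 / sqrt x"
proof -
  define t where "t = sqrt x"
  have t: "0 < t" "x = t\<^sup>2" using assms unfolding t_def by auto
  have "2 * a ^ 3 - (3 * a\<^sup>2 - t\<^sup>2) * t = (t - a)\<^sup>2 * (t + 2 * a)" by algebra
  moreover have "(t - a)\<^sup>2 * (t + 2 * a) \<ge> 0" using t assms by simp
  ultimately have "(3 * a\<^sup>2 - t\<^sup>2) * t \<le> 2 * a ^ 3" by linarith
  then show ?thesis using t assms unfolding t_def[symmetric] by (simp add: field_simps)
qed

lemma inverse_sqrt_add_ge:
  assumes "0 < x" "0 < y" "0 < a"
  shows "(6 * a\<^sup>2 - (x + y)) / (2 * a ^ 3) \<le> 1 / sqrt x + 1 / sqrt y"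
proof -
  have "(6 * a\<^sup>2 - (x + y)) / (2 * a ^ 3) = (3 * a\<^sup>2 - x) / (2 * a ^ 3) + (3 * a\<^sup>2 - y) / (2 * a ^ 3)"
    by (simp add: add_divide_distrib[symmetric])
  then show ?thesis using inverse_sqrt_tangent[OF assms(1,3)] inverse_sqrt_tangent[OF assms(2,3)]
    by linarith
qed

text \<open>A long third side forces r2 and r3 to be nearly opposite, so their projections
  onto the direction of r1 almost cancel.\<close>

lemma sqdist_sum_le_of_far:
  assumes "0 < r1" "r1 < e" "0 < r2" "r2 < a - e" "0 < r3" "r3 < a" "3 * e \<le> 2 * a"
    and far: "3 * a\<^sup>2 - a * e \<le> sqdist r2 r3 (\<alpha> - \<beta>)"
  shows "sqdist r1 r2 \<alpha> + sqdist r1 r3 \<beta> \<le> 2 * a\<^sup>2"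
proof -
  define u where "u = r2 * cos \<alpha> + r3 * cos \<beta>"
  have r2: "r2\<^sup>2 \<le> (a - e)\<^sup>2" and r3: "r3\<^sup>2 \<le> a\<^sup>2"
    using assms by (simp_all add: power_mono)
  have "u\<^sup>2 \<le> 2 * r2\<^sup>2 + 2 * r3\<^sup>2 - sqdist r2 r3 (\<alpha> - \<beta>)"
    unfolding u_def by (rule cos_combination_sq_le)
  also have "\<dots> \<le> 2 * (a - e)\<^sup>2 + 2 * a\<^sup>2 - (3 * a\<^sup>2 - a * e)" using r2 r3 far by linarith
  also have "\<dots> \<le> (a - 3 / 2 * e)\<^sup>2" by (simp add: power2_eq_square algebra_simps)
  finally have "\<bar>u\<bar> \<le> a - 3 / 2 * e"
    using assms(7) by (simp add: abs_le_square_iff[symmetric])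
  then have "r1 * (- (a - 3 / 2 * e)) \<le> r1 * u" using assms(1) by (intro mult_left_mono) auto
  moreover have "r1 * (r1 + (a - 3 / 2 * e)) \<le> e * (a - 1 / 2 * e)"
    using assms by (intro mult_mono) auto
  ultimately have "2 * r1\<^sup>2 - 2 * r1 * u \<le> 2 * a * e - e\<^sup>2"
    by (simp add: algebra_simps power2_eq_square)
  moreover have "r2\<^sup>2 + r3\<^sup>2 \<le> 2 * a\<^sup>2 - 2 * a * e + e\<^sup>2"
    using r2 r3 by (simp add: power2_eq_square algebra_simps)
  ultimately show ?thesis unfolding sqdist_add u_def[symmetric] by linarith
qed

text \<open>In terms of t = e / a < 1/20 this says 1/(2 - t) + t + t^2/2 \<le> 1 / sqrt 3.\<close>

lemma near_collinear_numeric: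
  assumes "0 < e" "20 * e < a"
  shows "2 / a + 1 / (2 * a - e)
         \<le> (4 * a\<^sup>2 - 2 * a * e - e\<^sup>2) / (2 * a ^ 3) + 1 / (sqrt 3 * a)"
proof -
  have a: "0 < a" using assms by simp
  have "1 / (2 * a - e) \<le> 20 / (39 * a)" using assms by (simp add: field_simps)
  moreover have "(4 * a\<^sup>2 - 2 * a * e - e\<^sup>2) / (2 * a ^ 3) = 2 / a - (2 * a * e + e\<^sup>2) / (2 * a ^ 3)"
    using a by (simp add: field_simps power2_eq_square power3_eq_cube)
  moreover have "(2 * a * e + e\<^sup>2) / (2 * a ^ 3) \<le> 41 / (800 * a)"
  proof -
    have "e * e \<le> (a / 20) * (a / 20)" "a * e \<le> a * (a / 20)"
      using assms a by (intro mult_mono; simp)+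
    then have "2 * a * e + e\<^sup>2 \<le> 41 / 400 * a\<^sup>2" by (simp add: power2_eq_square)
    then have "(2 * a * e + e\<^sup>2) / (2 * a ^ 3) \<le> (41 / 400 * a\<^sup>2) / (2 * a ^ 3)"
      using a by (intro divide_right_mono) auto
    also have "\<dots> = 41 / (800 * a)" using a by (simp add: power2_eq_square power3_eq_cube)
    finally show ?thesis .
  qed
  moreover have "4 / (7 * a) \<le> 1 / (sqrt 3 * a)"
  proof -
    have "sqrt 3 \<le> sqrt ((7 / 4)\<^sup>2)" by (simp add: power2_eq_square)
    then have "sqrt 3 \<le> 7 / 4" by simp
    then show ?thesis using a by (simp add: field_simps)
  qed
  moreover have "20 / (39 * a) + 41 / (800 * a) \<le> 4 / (7 * a)" using a by (simp add: field_simps)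
  ultimately show ?thesis by linarith
qed

lemma near_collinear_bound:
  assumes "0 < r1" "r1 < e" "S - e < r2" "r2 < S" "S < r3" "r3 < S + e" "19 * e < S"
  shows "2 / (S + e) + 1 / (2 * S + e)
         \<le> 1 / sqrt (sqdist r1 r2 \<alpha>) + 1 / sqrt (sqdist r1 r3 \<beta>)
            + 1 / sqrt (sqdist r2 r3 (\<alpha> - \<beta>))"
proof -
  define a where "a = S + e"
  define X Y Z where "X = sqdist r1 r2 \<alpha>" and "Y = sqdist r1 r3 \<beta>"
    and "Z = sqdist r2 r3 (\<alpha> - \<beta>)"
  have e: "0 < e" "20 * e < a" using assms unfolding a_def by linarith+
  have pos: "0 < X" "0 < Y" "0 < Z" unfolding X_def Y_def Z_def using assms by (auto intro: sqdist_pos)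
  have pair: "(6 * a\<^sup>2 - (X + Y)) / (2 * a ^ 3) \<le> 1 / sqrt X + 1 / sqrt Y"
    using inverse_sqrt_add_ge[OF pos(1,2)] e by simp
  have "2 / a + 1 / (2 * a - e) \<le> 1 / sqrt X + 1 / sqrt Y + 1 / sqrt Z"
  proof (cases "3 * a\<^sup>2 - a * e \<le> Z")
    case True
    then have "X + Y \<le> 2 * a\<^sup>2"
      unfolding X_def Y_def Z_def using assms e by (intro sqdist_sum_le_of_far) (auto simp: a_def)
    then have "4 * a\<^sup>2 / (2 * a ^ 3) \<le> (6 * a\<^sup>2 - (X + Y)) / (2 * a ^ 3)"
      using e by (intro divide_right_mono) auto
    moreover have "4 * a\<^sup>2 / (2 * a ^ 3) = 2 / a"
      using e by (simp add: power2_eq_square power3_eq_cube)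
    moreover have "1 / (2 * a - e) \<le> 1 / sqrt Z"
    proof -
      have "sqrt Z \<le> r2 + r3" unfolding Z_def using assms by (intro sqrt_sqdist_le) auto
      then show ?thesis using pos(3) assms unfolding a_def by (intro divide_left_mono) auto
    qed
    ultimately show ?thesis using pair by linarith
  next
    case False
    have "X \<le> (r1 + r2)\<^sup>2" "Y \<le> (r1 + r3)\<^sup>2"
      unfolding X_def Y_def using assms by (intro sqdist_le; simp)+
    moreover have "(r1 + r2)\<^sup>2 \<le> a\<^sup>2" "(r1 + r3)\<^sup>2 \<le> (a + e)\<^sup>2"
      using assms unfolding a_def by (intro power_mono; simp)+
    ultimately have "4 * a\<^sup>2 - 2 * a * e - e\<^sup>2 \<le> 6 * a\<^sup>2 - (X + Y)"
      by (simp add: power2_eq_square algebra_simps)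
    then have "(4 * a\<^sup>2 - 2 * a * e - e\<^sup>2) / (2 * a ^ 3) \<le> (6 * a\<^sup>2 - (X + Y)) / (2 * a ^ 3)"
      using e by (intro divide_right_mono) auto
    then have "(4 * a\<^sup>2 - 2 * a * e - e\<^sup>2) / (2 * a ^ 3) \<le> 1 / sqrt X + 1 / sqrt Y"
      using pair by linarith
    moreover have "1 / (sqrt 3 * a) \<le> 1 / sqrt Z"
    proof -
      have "0 < a * e" using e by simp
      then have "sqrt Z \<le> sqrt (3 * a\<^sup>2)" using False by simp
      then have "sqrt Z \<le> sqrt 3 * a" using e by (simp add: real_sqrt_mult)
      then show ?thesis using pos(3) e by (intro divide_left_mono mult_pos_pos) auto
    qed
    ultimately show ?thesis using near_collinear_numeric[OF e] by linarith
  qed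
  moreover have "2 * a - e = 2 * S + e" unfolding a_def by simp
  ultimately show ?thesis unfolding a_def X_def Y_def Z_def by (simp add: add.commute)
qed

lemma rcost_ge_near_collinear:
  assumes "0 < r1" "r1 < e" "S - e < r2" "r2 < S" "S < r3" "r3 < S + e" "19 * e < S"
  shows "ereal (2 / (S + e) + 1 / (2 * S + e)) \<le> rcost r1 r2 r3"
proof (rule rcost_ge)
  fix \<alpha> \<beta>
  have "r1 \<noteq> r2" "r1 \<noteq> r3" "r2 \<noteq> r3" using assms by auto
  with assms show "ereal (2 / (S + e) + 1 / (2 * S + e)) \<le> Ccost r1 r2 r3 \<alpha> \<beta>"
    using near_collinear_bound[OF assms, of \<alpha> \<beta>] by (simp add: Ccost_def inv_dist_eq)
qed

lemma eps_small_of_cost_gap: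
  assumes "0 < s1" "0 < \<epsilon>" "\<epsilon> < min s1 (s2 - s1)" "\<epsilon> < M"
    and gap: "sqrt 3 / (s1 - \<epsilon>) + 1 / s1 + 1 / (M - \<epsilon>)
              < 2 / (s2 + \<epsilon>) + 1 / (2 * s2 + \<epsilon>) + 1 / (2 * s1 + \<epsilon>)"
  shows "19 * \<epsilon> < s2"
proof (rule ccontr)
  assume "\<not> 19 * \<epsilon> < s2"
  then have big: "s2 \<le> 19 * \<epsilon>" by simp
  have s2: "0 < s2" "1 / s2 \<le> 1 / s1" using assms by (auto intro: divide_left_mono)
  have "2 / (s2 + \<epsilon>) \<le> 19 / 10 / s2" using big s2 assms by (simp add: field_simps)
  moreover have "1 / (2 * s2 + \<epsilon>) \<le> 1 / 2 / s2" using s2 assms by (simp add: field_simps)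
  moreover have "1 / (2 * s1 + \<epsilon>) \<le> 1 / 2 / s1" using assms by (simp add: field_simps)
  moreover have "19 / 10 / s2 \<le> sqrt 3 / (s1 - \<epsilon>)"
  proof -
    have sqrt3: "17 / 10 \<le> sqrt 3" by (rule real_le_rsqrt) (simp add: power2_eq_square)
    have "0 < s1 - \<epsilon>" "s1 - \<epsilon> \<le> 17 / 19 * s2" using assms big by auto
    then have "19 / 10 / s2 \<le> 17 / 10 / (s1 - \<epsilon>)" by (simp add: field_simps)
    also have "\<dots> \<le> sqrt 3 / (s1 - \<epsilon>)"
      using sqrt3 \<open>0 < s1 - \<epsilon>\<close> by (intro divide_right_mono) auto
    finally show ?thesis .
  qed
  moreover have "0 < 1 / (M - \<epsilon>)" using assms by simp
  ultimately show False using gap s2 by linarith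
qed

theorem lemma3p3:
  fixes s1 s2 \<epsilon> M r1 r2 r3 l1 l2 l3 :: real
  assumes "0 < s1" "s1 < s2"
    and "0 < \<epsilon>" "\<epsilon> < min s1 (s2 - s1)"
    and "M > \<epsilon>"
    and "2 / (s2 + \<epsilon>) + 1 / (2 * s2 + \<epsilon>) + 1 / (2 * s1 + \<epsilon>)
           > sqrt 3 / (s1 - \<epsilon>) + 1 / s1 + 1 / (M - \<epsilon>)"
    and "0 < r1" "r1 < \<epsilon>"
    and "s2 - \<epsilon> < r2" "r2 < s2"
    and "s2 < r3" "r3 < s2 + \<epsilon>"
    and "s1 - \<epsilon> < l1" "l1 < s1"
    and "s1 < l2" "l2 < s1 + \<epsilon>"
    and "M < l3"
    and "r3 \<ge> phi r1 r2"
    and "l3 \<ge> phi l1 l2"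
  shows "rcost r1 r2 r3 + rcost l1 l2 l3 > rcost l1 r2 r3 + rcost r1 l2 l3"
proof -
  define near_collinear where "near_collinear = 2 / (s2 + \<epsilon>) + 1 / (2 * s2 + \<epsilon>)"
  define triangle where "triangle = 1 / (l1 + l2) + 1 / (l1 + l3) + 1 / (l2 + l3)"
  define equilateral where "equilateral = sqrt 3 / (s1 - \<epsilon>)"
  define collinear where "collinear = 1 / (r1 + l2) + 1 / (l3 - r1) + 1 / (l2 + l3)"
  have "19 * \<epsilon> < s2" using eps_small_of_cost_gap assms(1,3-6) by blast
  then have lower_r: "ereal near_collinear \<le> rcost r1 r2 r3"
    unfolding near_collinear_def using assms by (intro rcost_ge_near_collinear) auto
  have lower_l: "ereal triangle \<le> rcost l1 l2 l3"
    unfolding triangle_def using assms by (intro rcost_ge_inverse_sums) auto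
  have upper_l: "rcost l1 r2 r3 \<le> ereal equilateral"
    unfolding equilateral_def using assms by (intro rcost_le_equilateral) auto
  have upper_r: "rcost r1 l2 l3 \<le> ereal collinear"
    unfolding collinear_def using assms by (intro rcost_le_collinear) auto
  have gap: "equilateral + collinear < near_collinear + triangle"
  proof -
    have "1 / (2 * s1 + \<epsilon>) < 1 / (l1 + l2)" using assms by (intro divide_strict_left_mono) auto
    moreover have "1 / (r1 + l2) < 1 / s1" using assms by (intro divide_strict_left_mono) auto
    moreover have "1 / (l3 - r1) < 1 / (M - \<epsilon>)" using assms by (intro divide_strict_left_mono) auto
    moreover have "0 < 1 / (l1 + l3)" using assms by simp
    ultimately show ?thesis using assms(6)
      unfolding near_collinear_def triangle_def equilateral_def collinear_def by linarith
  qed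
  have "rcost l1 r2 r3 + rcost r1 l2 l3 \<le> ereal equilateral + ereal collinear"
    using upper_l upper_r by (rule add_mono)
  also have "\<dots> < ereal near_collinear + ereal triangle" using gap by simp
  also have "\<dots> \<le> rcost r1 r2 r3 + rcost l1 l2 l3" using lower_r lower_l by (rule add_mono)
  finally show ?thesis .
qed

end
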